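(* Let $A,B$ be set-germs at $0\in\mathbb{R}^n$ with $0\in\overline{A}\cap\overline{B}$ and $D(A)\subseteq D(B)$. If $A$ satisfies condition (WSSP)-relative to $B$, then $A$ satisfies condition (SSP)-relative to $B$. Hence the relative conditions (SSP) and (WSSP) are equivalent.
   Context: For a set-germ $A\subset\mathbb{R}^n$ at $0$ with $0\in\overline A$, $D(A)=\{a\in S^{n-1}:\exists\, x_i\in A\setminus\{0\},\ x_i\to0,\ x_i/\|x_i\|\to a\}$. For sequences, $\|u_m\|\ll\|v_m\|,\|w_m\|$ means $\|u_m\|/\|v_m\|\to0$ and $\|u_m\|/\|w_m\|\to0$. $A$ satisfies condition (SSP)-relative to $B$ if for every sequence $a_m\in B$ tending to $0$ with $\lim a_m/\|a_m\|\in D(A)$ there is a sequence $b_m\in A$ with $\|a_m-b_m\|\ll\|a_m\|,\|b_m\|$. $A$ satisfies condition (WSSP)-relative to $B$ if for every sequence $a_m\in B$ tending to $0$ with $\lim a_m/\|a_m\|\in D(A)$ there is a subsequence $(m_j)$ and points $b_{m_j}\in A$ with $\|a_{m_j}-b_{m_j}\|\ll\|a_{m_j}\|,\|b_{m_j}\|$ as $j\to\infty$. *)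

theory Defs
  imports "HOL-Analysis.Analysis"
begin

text \<open>Set-germs at 0 are represented by sets; all conditions below only
depend on the behaviour near 0.\<close>

definition tangent_dirs :: "'a::euclidean_space set \<Rightarrow> 'a set" ("D") where
  "D A = {v. norm v = 1 \<and> (\<exists>x::nat \<Rightarrow> 'a. (\<forall>i. x i \<in> A - {0}) \<and> x \<longlonglongrightarrow> 0
            \<and> (\<lambda>i. x i /\<^sub>R norm (x i)) \<longlonglongrightarrow> v)}"

definition SSP_rel :: "'a::euclidean_space set \<Rightarrow> 'a set \<Rightarrow> bool" where
  "SSP_rel A B \<longleftrightarrow> (\<forall>a::nat \<Rightarrow> 'a. \<forall>v.
      (\<forall>m. a m \<in> B - {0}) \<and> a \<longlonglongrightarrow> 0 \<and> (\<lambda>m. a m /\<^sub>R norm (a m)) \<longlonglongrightarrow> v \<and> v \<in> D A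
      \<longrightarrow> (\<exists>b::nat \<Rightarrow> 'a. (\<forall>m. b m \<in> A)
             \<and> (\<lambda>m. norm (a m - b m) / norm (a m)) \<longlonglongrightarrow> 0
             \<and> (\<lambda>m. norm (a m - b m) / norm (b m)) \<longlonglongrightarrow> 0))"

definition WSSP_rel :: "'a::euclidean_space set \<Rightarrow> 'a set \<Rightarrow> bool" where
  "WSSP_rel A B \<longleftrightarrow> (\<forall>a::nat \<Rightarrow> 'a. \<forall>v.
      (\<forall>m. a m \<in> B - {0}) \<and> a \<longlonglongrightarrow> 0 \<and> (\<lambda>m. a m /\<^sub>R norm (a m)) \<longlonglongrightarrow> v \<and> v \<in> D A
      \<longrightarrow> (\<exists>r::nat \<Rightarrow> nat. \<exists>b::nat \<Rightarrow> 'a. strict_mono r \<and> (\<forall>j. b j \<in> A)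
             \<and> (\<lambda>j. norm (a (r j) - b j) / norm (a (r j))) \<longlonglongrightarrow> 0
             \<and> (\<lambda>j. norm (a (r j) - b j) / norm (b j)) \<longlonglongrightarrow> 0))"

end

theory Submission
  imports Defs
begin

text \<open>If (SSP) failed along some sequence, the gap to A would stay above some \<open>e > 0\<close> along a
subsequence; (WSSP) applied to that subsequence yields a further subsequence along which the gap
tends to 0, a contradiction. Hence for every \<open>e > 0\<close> points of A within gap \<open>e\<close> exist eventually,
and choosing near-minimisers of the gap for each index gives the sequence required by (SSP).\<close>

definition relative_gap :: "'a::real_normed_vector \<Rightarrow> 'a \<Rightarrow> real" where
  "relative_gap x y = max (norm (x - y) / norm x) (norm (x - y) / norm y)"

lemma relative_gap_nonneg: "relative_gap x y \<ge> 0"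
  by (simp add: relative_gap_def le_max_iff_disj)

lemma tendsto_relative_gap_iff:
  "((\<lambda>m. relative_gap (x m) (y m)) \<longlongrightarrow> 0) F \<longleftrightarrow>
     ((\<lambda>m. norm (x m - y m) / norm (x m)) \<longlongrightarrow> 0) F \<and>
     ((\<lambda>m. norm (x m - y m) / norm (y m)) \<longlongrightarrow> 0) F"
proof
  assume gap: "((\<lambda>m. relative_gap (x m) (y m)) \<longlongrightarrow> 0) F"
  show "((\<lambda>m. norm (x m - y m) / norm (x m)) \<longlongrightarrow> 0) F \<and>
        ((\<lambda>m. norm (x m - y m) / norm (y m)) \<longlongrightarrow> 0) F"
    by (intro conjI tendsto_sandwich[OF _ _ tendsto_const gap])
       (auto simp: relative_gap_def)
next
  assume "((\<lambda>m. norm (x m - y m) / norm (x m)) \<longlongrightarrow> 0) F \<and>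
          ((\<lambda>m. norm (x m - y m) / norm (y m)) \<longlongrightarrow> 0) F"
  then show "((\<lambda>m. relative_gap (x m) (y m)) \<longlongrightarrow> 0) F"
    using tendsto_max by (fastforce simp: relative_gap_def)
qed

lemma frequently_sequentially_obtain_strict_mono:
  assumes "frequently P sequentially"
  obtains s :: "nat \<Rightarrow> nat" where "strict_mono s" "\<And>k. P (s k)"
proof -
  have "infinite {n. P n}"
    using assms by (simp add: frequently_cofinite flip: cofinite_eq_sequentially)
  with infinite_enumerate that show thesis by blast
qed

lemma eventually_approx_minimizers:
  fixes F :: "nat \<Rightarrow> 'b \<Rightarrow> real"
  assumes nonneg: "\<And>m b. F m b \<ge> 0"
    and close: "\<And>e. e > 0 \<Longrightarrow> eventually (\<lambda>m. \<exists>b\<in>A. F m b < e) sequentially"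
  obtains b where "\<And>m. b m \<in> A" "(\<lambda>m. F m (b m)) \<longlonglongrightarrow> 0"
proof -
  define g where "g m = Inf (F m ` A)" for m
  have "A \<noteq> {}"
    using eventually_happens'[OF _ close[of 1]] by auto
  have bdd: "bdd_below (F m ` A)" for m
    using nonneg by (intro bdd_belowI[of _ 0]) auto
  then have g_le: "g m \<le> F m b" if "b \<in> A" for m b
    unfolding g_def using that by (simp add: cInf_lower)
  have "\<exists>b\<in>A. F m b < g m + 1 / (real m + 1)" for m
    using cInf_lessD[of "F m ` A" "g m + 1 / (real m + 1)"] \<open>A \<noteq> {}\<close>
    by (auto simp: g_def)
  then obtain b where b: "\<And>m. b m \<in> A" "\<And>m. F m (b m) < g m + 1 / (real m + 1)"
    by metis
  have "(\<lambda>m. F m (b m)) \<longlonglongrightarrow> 0"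
  proof (rule order_tendstoI)
    fix e :: real
    assume "e < 0"
    then show "eventually (\<lambda>m. e < F m (b m)) sequentially"
      using nonneg by (simp add: less_le_trans)
  next
    fix e :: real
    assume "0 < e"
    have "eventually (\<lambda>m. \<exists>b\<in>A. F m b < e/2) sequentially"
      using \<open>0 < e\<close> by (intro close) simp
    then have "eventually (\<lambda>m. g m < e/2) sequentially"
      by (rule eventually_mono) (use g_le le_less_trans in blast)
    moreover have "eventually (\<lambda>m. 1 / (real m + 1) < e/2) sequentially"
      using order_tendstoD(2)[OF LIMSEQ_inverse_real_of_nat, of "e/2"] \<open>0 < e\<close>
      by (simp add: inverse_eq_divide add.commute)
    ultimately show "eventually (\<lambda>m. F m (b m) < e) sequentially"
    proof eventually_elim
      case (elim m)
      with b(2)[of m] show "F m (b m) < e" by linarith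
    qed
  qed
  with b(1) that show thesis by blast
qed

lemma WSSP_rel_eventually_close:
  fixes A B :: "'a::euclidean_space set"
  assumes W: "WSSP_rel A B"
    and a: "\<forall>m. a m \<in> B - {0}" "a \<longlonglongrightarrow> 0" "(\<lambda>m. a m /\<^sub>R norm (a m)) \<longlonglongrightarrow> v" "v \<in> D A"
    and "e > 0"
  shows "eventually (\<lambda>m. \<exists>b\<in>A. relative_gap (a m) b < e) sequentially"
proof (rule ccontr)
  assume "\<not> ?thesis"
  then obtain s :: "nat \<Rightarrow> nat"
    where s: "strict_mono s" "\<And>k. \<forall>b\<in>A. relative_gap (a (s k)) b \<ge> e"
    by (auto simp: not_eventually not_less elim: frequently_sequentially_obtain_strict_mono)
  have "(\<forall>k. a (s k) \<in> B - {0}) \<and> (\<lambda>k. a (s k)) \<longlonglongrightarrow> 0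
        \<and> (\<lambda>k. a (s k) /\<^sub>R norm (a (s k))) \<longlonglongrightarrow> v \<and> v \<in> D A"
    using a LIMSEQ_subseq_LIMSEQ[OF _ s(1)] by (auto simp: o_def)
  then obtain r b where "\<forall>j. b j \<in> A"
    and "(\<lambda>j. norm (a (s (r j)) - b j) / norm (a (s (r j)))) \<longlonglongrightarrow> 0"
    and "(\<lambda>j. norm (a (s (r j)) - b j) / norm (b j)) \<longlonglongrightarrow> 0"
    using W[unfolded WSSP_rel_def, rule_format, of "\<lambda>k. a (s k)" v] by blast
  then have "(\<lambda>j. relative_gap (a (s (r j))) (b j)) \<longlonglongrightarrow> 0"
    by (simp add: tendsto_relative_gap_iff)
  from order_tendstoD(2)[OF this \<open>e > 0\<close>] obtain j
    where "relative_gap (a (s (r j))) (b j) < e"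
    using eventually_happens' trivial_limit_sequentially by blast
  moreover have "e \<le> relative_gap (a (s (r j))) (b j)"
    using s(2) \<open>\<forall>j. b j \<in> A\<close> by blast
  ultimately show False by simp
qed

lemma WSSP_rel_imp_SSP_rel:
  fixes A B :: "'a::euclidean_space set"
  assumes "WSSP_rel A B"
  shows "SSP_rel A B"
  unfolding SSP_rel_def
proof (intro allI impI)
  fix a :: "nat \<Rightarrow> 'a" and v
  assume "(\<forall>m. a m \<in> B - {0}) \<and> a \<longlonglongrightarrow> 0 \<and> (\<lambda>m. a m /\<^sub>R norm (a m)) \<longlonglongrightarrow> v \<and> v \<in> D A"
  then obtain b where "\<And>m. b m \<in> A" "(\<lambda>m. relative_gap (a m) (b m)) \<longlonglongrightarrow> 0"
    using eventually_approx_minimizers[of "\<lambda>m. relative_gap (a m)" A]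
      WSSP_rel_eventually_close[OF assms] relative_gap_nonneg by blast
  then show "\<exists>b. (\<forall>m. b m \<in> A) \<and> (\<lambda>m. norm (a m - b m) / norm (a m)) \<longlonglongrightarrow> 0
             \<and> (\<lambda>m. norm (a m - b m) / norm (b m)) \<longlonglongrightarrow> 0"
    by (auto simp: tendsto_relative_gap_iff)
qed

lemma SSP_rel_imp_WSSP_rel:
  fixes A B :: "'a::euclidean_space set"
  assumes "SSP_rel A B"
  shows "WSSP_rel A B"
  unfolding WSSP_rel_def
proof (intro allI impI)
  fix a :: "nat \<Rightarrow> 'a" and v
  assume "(\<forall>m. a m \<in> B - {0}) \<and> a \<longlonglongrightarrow> 0 \<and> (\<lambda>m. a m /\<^sub>R norm (a m)) \<longlonglongrightarrow> v \<and> v \<in> D A"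
  with assms obtain b where "\<forall>m. b m \<in> A"
    "(\<lambda>m. norm (a m - b m) / norm (a m)) \<longlonglongrightarrow> 0"
    "(\<lambda>m. norm (a m - b m) / norm (b m)) \<longlonglongrightarrow> 0"
    unfolding SSP_rel_def by blast
  with strict_mono_id show "\<exists>r b. strict_mono r \<and> (\<forall>j. b j \<in> A)
      \<and> (\<lambda>j. norm (a (r j) - b j) / norm (a (r j))) \<longlonglongrightarrow> 0
      \<and> (\<lambda>j. norm (a (r j) - b j) / norm (b j)) \<longlonglongrightarrow> 0"
    by (intro exI[of _ id] exI[of _ b]) simp
qed

theorem proposition2p7:
  fixes A B :: "'a::euclidean_space set"
  assumes "0 \<in> closure A" and "0 \<in> closure B" and "D A \<subseteq> D B"
  shows "(WSSP_rel A B \<longrightarrow> SSP_rel A B) \<and> (SSP_rel A B \<longleftrightarrow> WSSP_rel A B)"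
  using WSSP_rel_imp_SSP_rel SSP_rel_imp_WSSP_rel by blast

end
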